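(* Let $G$ be a strongly connected unweighted digraph without loops, let $H$ be its undirectization, let $0<\tau\le1$, and let $M_\tau(t)=I-At+(D-\tau I)\tau t^2+(A-S)\tau^2t^3$. If $H$ has at least two cycles, then $M_\tau(t)$ has at least one real eigenvalue in the open interval $(0,1/\tau)$.
   Context: $G=(V,E)$ with adjacency matrix $A$, $S=A\circ A^T$, $D=\mathrm{diag}(\mathrm{diag}(A^2))$. The undirectization $H$ is the undirected simple graph with edge $\{i,j\}$ whenever $(i,j)\in E$ or $(j,i)\in E$; a cycle is a closed path of length $\ge3$ up to cyclic permutations and reversal. Eigenvalues of $M_\tau(t)$ are roots of $\det M_\tau(t)$. Strongly connected: every vertex reachable from every other by a directed walk. *)

theory Defs
  imports "HOL-Analysis.Analysis"
begin

definition adj_matrix :: "('n::finite \<Rightarrow> 'n \<Rightarrow> bool) \<Rightarrow> real^'n^'n" where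
  "adj_matrix E = (\<chi> i j. if E i j then 1 else 0)"

text \<open>S = A o A^T (Hadamard product).\<close>
definition sym_part :: "real^'n^'n \<Rightarrow> real^'n^'n" where
  "sym_part A = (\<chi> i j. A $ i $ j * A $ j $ i)"

text \<open>D = diag(diag(A^2)).\<close>
definition diag_sq :: "real^'n^'n \<Rightarrow> real^'n::finite^'n" where
  "diag_sq A = (\<chi> i j. if i = j then (A ** A) $ i $ i else 0)"

definition M_tau :: "real^'n^'n \<Rightarrow> real \<Rightarrow> real \<Rightarrow> real^'n::finite^'n" where
  "M_tau A \<tau> t = mat 1 - t *\<^sub>R A + (\<tau> * t^2) *\<^sub>R (diag_sq A - \<tau> *\<^sub>R mat 1)
                  + (\<tau>^2 * t^3) *\<^sub>R (A - sym_part A)"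

definition strongly_connected :: "('n \<Rightarrow> 'n \<Rightarrow> bool) \<Rightarrow> bool" where
  "strongly_connected E \<longleftrightarrow> (\<forall>u v. E\<^sup>*\<^sup>* u v)"

definition und_adj :: "('n \<Rightarrow> 'n \<Rightarrow> bool) \<Rightarrow> 'n \<Rightarrow> 'n \<Rightarrow> bool" where
  "und_adj E u v \<longleftrightarrow> u \<noteq> v \<and> (E u v \<or> E v u)"

definition is_cycle :: "('n \<Rightarrow> 'n \<Rightarrow> bool) \<Rightarrow> 'n list \<Rightarrow> bool" where
  "is_cycle E cs \<longleftrightarrow> length cs \<ge> 3 \<and> distinct cs \<and>
     (\<forall>i < length cs. und_adj E (cs ! i) (cs ! ((i + 1) mod length cs)))"

definition cycle_equiv :: "'n list \<Rightarrow> 'n list \<Rightarrow> bool" where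
  "cycle_equiv cs ds \<longleftrightarrow> (\<exists>k. ds = rotate k cs \<or> ds = rev (rotate k cs))"

definition at_least_two_cycles :: "('n \<Rightarrow> 'n \<Rightarrow> bool) \<Rightarrow> bool" where
  "at_least_two_cycles E \<longleftrightarrow>
     (\<exists>c1 c2. is_cycle E c1 \<and> is_cycle E c2 \<and> \<not> cycle_equiv c1 c2)"

end

theory Submission
  imports Defs
begin

text \<open>Let W be the non-backtracking matrix on the arcs of G in which a backtracking step
  \<open>(u,v) \<rightarrow> (v,u)\<close> has weight \<open>1 - \<tau>\<close>. If \<open>W z = \<mu> z\<close> with \<open>\<mu> > \<tau>\<close>, the out-sums
  \<open>x\<^sub>v = \<Sum>\<^sub>w z(v,w)\<close> form a kernel vector of \<open>M\<^sub>\<tau>(1/\<mu>)\<close>, so it suffices to find an eigenvalue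
  \<open>\<mu> > 1 \<ge> \<tau>\<close>. As W is nonnegative, a Collatz--Wielandt argument gives one as soon as a
  diagonal entry of some power of W is at least 2, i.e. as soon as there are two different
  nonbacktracking closed walks of equal length starting with the same arc.

  These walks come from the cycle space. The flows of two different cycles of H are linearly
  independent, and by strong connectivity they lie in the span of the flows of directed closed
  walks through a fixed vertex; so there are closed walks \<open>P\<^sub>1, P\<^sub>2\<close> there with independent
  flows. Removing backtracks from \<open>P\<^sub>1 P\<^sub>2\<^sup>n\<close> keeps the flow \<open>f\<^sub>1 + n f\<^sub>2\<close>; two of these walks
  start with the same arc, and repeating each one a suitable number of times equalizes their
  lengths while the flows stay different.\<close>

section \<open>Non-backtracking matrix and the kernel of \<open>M\<^sub>\<tau>\<close>\<close>

definition nb_matrix :: "('n::finite \<Rightarrow> 'n \<Rightarrow> bool) \<Rightarrow> real \<Rightarrow> real^('n \<times> 'n)^('n \<times> 'n)" where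
  "nb_matrix E \<tau> = (\<chi> a b. if E (fst a) (snd a) \<and> E (fst b) (snd b) \<and> snd a = fst b
                           then (if snd b = fst a then 1 - \<tau> else 1) else 0)"

lemma nb_matrix_nonneg: "\<tau> \<le> 1 \<Longrightarrow> 0 \<le> nb_matrix E \<tau> $ a $ b"
  by (simp add: nb_matrix_def)

lemma nb_matrix_mult_vec:
  "(nb_matrix E \<tau> *v z) $ (v, w) =
     (if E v w then \<Sum>u\<in>UNIV. if E w u then (if u = v then 1 - \<tau> else 1) * z $ (w, u) else 0 else 0)"
proof -
  have "(nb_matrix E \<tau> *v z) $ (v, w) = (\<Sum>a\<in>UNIV. \<Sum>u\<in>UNIV. nb_matrix E \<tau> $ (v, w) $ (a, u) * z $ (a, u))"
    by (simp add: matrix_vector_mult_def sum.cartesian_product UNIV_Times_UNIV[symmetric]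
             del: UNIV_Times_UNIV)
  also have "\<dots> = (\<Sum>u\<in>UNIV. nb_matrix E \<tau> $ (v, w) $ (w, u) * z $ (w, u))"
    by (subst sum.remove[of UNIV w]) (auto simp: nb_matrix_def intro!: sum.neutral)
  finally show ?thesis
    by (auto simp: nb_matrix_def intro!: sum.cong)
qed

lemma M_tau_mult_vec:
  "(M_tau (adj_matrix E) \<tau> t *v x) $ v =
     x $ v - t * (\<Sum>w\<in>UNIV. if E v w then x $ w else 0)
     + \<tau> * t^2 * ((\<Sum>w\<in>UNIV. if E v w \<and> E w v then 1 else 0) - \<tau>) * x $ v
     + \<tau>^2 * t^3 * (\<Sum>w\<in>UNIV. if E v w \<and> \<not> E w v then x $ w else 0)"
proof -
  have entry: "M_tau (adj_matrix E) \<tau> t $ v $ w =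
      (if v = w then 1 + \<tau> * t^2 * ((\<Sum>k\<in>UNIV. if E v k \<and> E k v then 1 else 0) - \<tau>) else 0)
      - t * (if E v w then 1 else 0) + \<tau>^2 * t^3 * (if E v w \<and> \<not> E w v then 1 else 0)" for w
    by (simp add: M_tau_def diag_sq_def sym_part_def adj_matrix_def matrix_matrix_mult_def mat_def
         if_distrib[of "\<lambda>x. x * _"] cong: if_cong)
       (auto intro!: sum.cong)
  have "(M_tau (adj_matrix E) \<tau> t *v x) $ v = (\<Sum>w\<in>UNIV. M_tau (adj_matrix E) \<tau> t $ v $ w * x $ w)"
    by (simp add: matrix_vector_mult_def)
  also have "\<dots> = (\<Sum>w\<in>UNIV. (if v = w then (1 + \<tau> * t^2 * ((\<Sum>k\<in>UNIV. if E v k \<and> E k v then 1 else 0) - \<tau>)) * x $ w else 0)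
      - t * (if E v w then x $ w else 0) + \<tau>^2 * t^3 * (if E v w \<and> \<not> E w v then x $ w else 0))"
    by (rule sum.cong) (auto simp: entry algebra_simps)
  finally show ?thesis
    by (simp add: sum.distrib sum_subtractf sum_distrib_left[symmetric] algebra_simps)
qed

lemma nb_eigenvector_vanishes_off_arcs:
  assumes "nb_matrix E \<tau> *v z = \<mu> *\<^sub>R z" "\<mu> \<noteq> 0" "\<not> E v w"
  shows "z $ (v, w) = 0"
  using arg_cong[OF assms(1), of "\<lambda>y. y $ (v, w)"] assms(2,3) by (simp add: nb_matrix_mult_vec)

lemma nb_eigenvector_arc:
  assumes eig: "nb_matrix E \<tau> *v z = \<mu> *\<^sub>R z" and "\<mu> \<noteq> 0" "E v w"
  shows "\<mu> * z $ (v, w) = (\<Sum>u\<in>UNIV. z $ (w, u)) - (if E w v then \<tau> * z $ (w, v) else 0)"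
proof -
  have "\<mu> * z $ (v, w) = (\<Sum>u\<in>UNIV. if E w u then (if u = v then 1 - \<tau> else 1) * z $ (w, u) else 0)"
    using arg_cong[OF eig, of "\<lambda>y. y $ (v, w)"] \<open>E v w\<close> by (simp add: nb_matrix_mult_vec)
  also have "\<dots> = (\<Sum>u\<in>UNIV. z $ (w, u) - (if u = v \<and> E w v then \<tau> * z $ (w, v) else 0))"
    using nb_eigenvector_vanishes_off_arcs[OF eig \<open>\<mu> \<noteq> 0\<close>] by (intro sum.cong) (auto simp: algebra_simps)
  finally show ?thesis
    by (simp add: sum_subtractf if_distrib[of "\<lambda>x. x * _"] cong: if_cong)
qed

text \<open>Eliminating z(w,v) from the equations of the arcs (v,w) and (w,v) expresses z(v,w) through
  the out-sums x of z alone; this is where the factor \<open>1 - \<tau>\<^sup>2 t\<^sup>2\<close> comes from.\<close>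

lemma nb_eigenvector_arc_out_sums:
  assumes eig: "nb_matrix E \<tau> *v z = \<mu> *\<^sub>R z" and t: "t * \<mu> = 1" and "E v w"
    and x: "\<And>u. x $ u = (\<Sum>w\<in>UNIV. z $ (u, w))"
  shows "(1 - \<tau>^2 * t^2) * z $ (v, w) =
           t * x $ w - (if E w v then \<tau> * t^2 * x $ v else \<tau>^2 * t^3 * x $ w)"
proof -
  have \<mu>: "\<mu> \<noteq> 0" using t by auto
  have arc: "z $ (a, b) = t * x $ b - (if E b a then \<tau> * t * z $ (b, a) else 0)" if "E a b" for a b
  proof -
    have "z $ (a, b) = t * (\<mu> * z $ (a, b))" by (simp add: mult.assoc[symmetric] t)
    then show ?thesis by (simp add: nb_eigenvector_arc[OF eig \<mu> that] x right_diff_distrib)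
  qed
  show ?thesis
  proof (cases "E w v")
    case True
    have "z $ (v, w) = t * x $ w - \<tau> * t * z $ (w, v)" "z $ (w, v) = t * x $ v - \<tau> * t * z $ (v, w)"
      using arc[OF \<open>E v w\<close>] arc[OF True] True \<open>E v w\<close> by simp_all
    then show ?thesis using True by (simp add: algebra_simps power2_eq_square)
  next
    case False
    then show ?thesis
      using arc[OF \<open>E v w\<close>] by (simp add: algebra_simps power2_eq_square power3_eq_cube)
  qed
qed

lemma det_eq_0_of_kernel:
  fixes A :: "real^'n^'n"
  assumes "A *v x = 0" "x \<noteq> 0"
  shows "det A = 0"
proof -
  have "rank A \<noteq> CARD('n)" using assms matrix_nonfull_linear_equations_eq by blast
  then show ?thesis using rank_bound[of A] by (simp add: det_eq_0_rank)
qed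

lemma M_tau_mult_nb_eigenvector_out_sums:
  assumes eig: "nb_matrix E \<tau> *v z = \<mu> *\<^sub>R z" and t: "t * \<mu> = 1"
    and x: "\<And>v. x $ v = (\<Sum>w\<in>UNIV. z $ (v, w))"
  shows "M_tau (adj_matrix E) \<tau> t *v x = 0"
proof -
  have "\<mu> \<noteq> 0" using t by auto
  have "(M_tau (adj_matrix E) \<tau> t *v x) $ v = 0" for v
  proof -
    have x_eq: "x $ v = (\<Sum>w\<in>UNIV. if E v w then z $ (v, w) else 0)"
      using nb_eigenvector_vanishes_off_arcs[OF eig \<open>\<mu> \<noteq> 0\<close>] by (auto simp: x intro!: sum.cong)
    have "(M_tau (adj_matrix E) \<tau> t *v x) $ v =
        (1 - \<tau>^2 * t^2) * (\<Sum>w\<in>UNIV. if E v w then z $ (v, w) else 0)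
        - t * (\<Sum>w\<in>UNIV. if E v w then x $ w else 0)
        + \<tau> * t^2 * (\<Sum>w\<in>UNIV. if E v w \<and> E w v then 1 else 0) * x $ v
        + \<tau>^2 * t^3 * (\<Sum>w\<in>UNIV. if E v w \<and> \<not> E w v then x $ w else 0)"
      by (simp add: M_tau_mult_vec x_eq[symmetric] algebra_simps power2_eq_square)
    also have "\<dots> = (\<Sum>w\<in>UNIV. (1 - \<tau>^2 * t^2) * (if E v w then z $ (v, w) else 0)
        - t * (if E v w then x $ w else 0)
        + \<tau> * t^2 * (if E v w \<and> E w v then 1 else 0) * x $ v
        + \<tau>^2 * t^3 * (if E v w \<and> \<not> E w v then x $ w else 0))"
      by (simp add: sum.distrib sum_subtractf sum_distrib_left sum_distrib_right)
    also have "\<dots> = (\<Sum>w\<in>UNIV. if E v w then (1 - \<tau>^2 * t^2) * z $ (v, w) - t * x $ w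
        + (if E w v then \<tau> * t^2 * x $ v else \<tau>^2 * t^3 * x $ w) else 0)"
      by (rule sum.cong) auto
    also have "\<dots> = 0"
      by (rule sum.neutral) (simp add: nb_eigenvector_arc_out_sums[OF eig t _ x])
    finally show ?thesis .
  qed
  then show ?thesis by (simp add: vec_eq_iff)
qed

lemma det_M_tau_eq_0_of_nb_eigenvector:
  assumes eig: "nb_matrix E \<tau> *v z = \<mu> *\<^sub>R z" and "z \<noteq> 0" and "0 < \<tau>" "\<tau> < \<mu>"
  shows "det (M_tau (adj_matrix E) \<tau> (1 / \<mu>)) = 0"
proof -
  define t where "t = 1 / \<mu>"
  define x where "x = (\<chi> v. \<Sum>w\<in>UNIV. z $ (v, w))"
  have t: "t * \<mu> = 1" and "\<mu> \<noteq> 0" using assms by (auto simp: t_def)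
  have x_comp: "x $ v = (\<Sum>w\<in>UNIV. z $ (v, w))" for v by (simp add: x_def)
  have "\<tau> * t < 1" using assms by (simp add: t_def field_simps)
  then have "(\<tau> * t)^2 < 1" using assms by (simp add: t_def power_less_one_iff abs_less_iff)
  then have damp: "1 - \<tau>^2 * t^2 \<noteq> 0" by (simp add: power_mult_distrib)
  have "x \<noteq> 0"
  proof
    assume "x = 0"
    then have x0: "x $ u = 0" for u by simp
    have "z $ (v, w) = 0" for v w
      using nb_eigenvector_arc_out_sums[OF eig t _ x_comp, of v w] damp
        nb_eigenvector_vanishes_off_arcs[OF eig \<open>\<mu> \<noteq> 0\<close>, of v w]
      by (cases "E v w"; cases "E w v") (simp_all add: x0)
    then show False using \<open>z \<noteq> 0\<close> by (simp add: vec_eq_iff)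
  qed
  with M_tau_mult_nb_eigenvector_out_sums[OF eig t x_comp] show ?thesis
    unfolding t_def by (rule det_eq_0_of_kernel)
qed

section \<open>Eigenvalues of nonnegative matrices\<close>

lemma nonneg_matrix_vector_mult_nonneg:
  fixes W :: "real^'a::finite^'a"
  assumes "\<And>i j. 0 \<le> W $ i $ j" "\<And>i. 0 \<le> z $ i"
  shows "0 \<le> (W *v z) $ i"
  using assms by (simp add: matrix_vector_mult_def sum_nonneg)

lemma nonneg_matrix_vector_mult_mono:
  fixes W :: "real^'a::finite^'a"
  assumes "\<And>i j. 0 \<le> W $ i $ j" "\<And>i. z $ i \<le> z' $ i"
  shows "(W *v z) $ i \<le> (W *v z') $ i"
  using assms by (simp add: matrix_vector_mult_def sum_mono mult_left_mono)

definition collatz_wielandt_set :: "real^'a^'a \<Rightarrow> real \<Rightarrow> (real^'a::finite) set" where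
  "collatz_wielandt_set W c =
     {z. (\<forall>i. 0 \<le> z $ i) \<and> (\<Sum>i\<in>UNIV. z $ i) = 1 \<and> (\<forall>i. c * z $ i \<le> (W *v z) $ i)}"

lemma compact_collatz_wielandt_set: "compact (collatz_wielandt_set W c)"
proof -
  have cont_sum: "continuous_on A (\<lambda>z::real^'a. \<Sum>i\<in>UNIV. z $ i)" for A
    by (intro continuous_on_sum continuous_on_component[OF continuous_on_id])
  have "closed (collatz_wielandt_set W c)"
    unfolding collatz_wielandt_set_def Collect_conj_eq
    by (intro closed_Int closed_Collect_all closed_halfspace_component_ge_cart
          closed_Collect_eq[OF cont_sum continuous_on_const]
          closed_Collect_le continuous_intros matrix_vector_mult_linear_continuous_on
          continuous_on_component)
  moreover have "collatz_wielandt_set W c \<subseteq> cbox 0 (\<chi> i. 1)"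
  proof
    fix z assume z: "z \<in> collatz_wielandt_set W c"
    then have "z $ i \<le> (\<Sum>i\<in>UNIV. z $ i)" for i
      by (intro member_le_sum) (auto simp: collatz_wielandt_set_def)
    then show "z \<in> cbox 0 (\<chi> i. 1)" using z by (simp add: mem_box_cart collatz_wielandt_set_def)
  qed
  ultimately show ?thesis by (metis compact_cbox compact_Int_closed inf.absorb_iff2)
qed

lemma convex_collatz_wielandt_set: "convex (collatz_wielandt_set W c)"
  unfolding convex_def
proof (intro ballI allI impI)
  fix x y :: "real^'a" and u v :: real
  assume xy: "x \<in> collatz_wielandt_set W c" "y \<in> collatz_wielandt_set W c"
    and uv: "0 \<le> u" "0 \<le> v" "u + v = 1"
  have "c * (u *\<^sub>R x + v *\<^sub>R y) $ i \<le> (W *v (u *\<^sub>R x + v *\<^sub>R y)) $ i" for i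
  proof -
    have "c * x $ i \<le> (W *v x) $ i" "c * y $ i \<le> (W *v y) $ i"
      using xy by (auto simp: collatz_wielandt_set_def)
    then have "u * (c * x $ i) + v * (c * y $ i) \<le> u * (W *v x) $ i + v * (W *v y) $ i"
      using uv by (intro add_mono mult_left_mono) auto
    then show ?thesis
      by (simp add: matrix_vector_right_distrib matrix_vector_mult_scaleR algebra_simps)
  qed
  moreover have "(\<Sum>i\<in>UNIV. (u *\<^sub>R x + v *\<^sub>R y) $ i) = u * (\<Sum>i\<in>UNIV. x $ i) + v * (\<Sum>i\<in>UNIV. y $ i)"
    by (simp add: sum.distrib sum_distrib_left)
  ultimately show "u *\<^sub>R x + v *\<^sub>R y \<in> collatz_wielandt_set W c"
    using xy uv by (simp add: collatz_wielandt_set_def)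
qed

lemma collatz_wielandt_set_sum_ge:
  assumes "z \<in> collatz_wielandt_set W c"
  shows "c \<le> (\<Sum>i\<in>UNIV. (W *v z) $ i)"
proof -
  have "c = (\<Sum>i\<in>UNIV. c * z $ i)" using assms by (simp add: collatz_wielandt_set_def sum_distrib_left[symmetric])
  also have "\<dots> \<le> (\<Sum>i\<in>UNIV. (W *v z) $ i)" using assms by (intro sum_mono) (simp add: collatz_wielandt_set_def)
  finally show ?thesis .
qed

lemma normalized_matrix_vector_mult_in_collatz_wielandt_set:
  fixes W :: "real^'a::finite^'a"
  assumes nonneg: "\<And>i j. 0 \<le> W $ i $ j" and "0 < c" and z: "z \<in> collatz_wielandt_set W c"
  shows "inverse (\<Sum>i\<in>UNIV. (W *v z) $ i) *\<^sub>R (W *v z) \<in> collatz_wielandt_set W c"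
proof -
  define s where "s = (\<Sum>i\<in>UNIV. (W *v z) $ i)"
  have s: "0 < s" using collatz_wielandt_set_sum_ge[OF z] \<open>0 < c\<close> by (simp add: s_def)
  have "0 \<le> (W *v z) $ i" for i
    using z by (intro nonneg_matrix_vector_mult_nonneg nonneg) (simp add: collatz_wielandt_set_def)
  moreover have "c * (W *v z) $ i \<le> (W *v (W *v z)) $ i" for i
  proof -
    have "(W *v (c *\<^sub>R z)) $ i \<le> (W *v (W *v z)) $ i"
      using z by (intro nonneg_matrix_vector_mult_mono nonneg) (simp add: collatz_wielandt_set_def)
    then show ?thesis by (simp add: matrix_vector_mult_scaleR)
  qed
  then have "inverse s * (c * (W *v z) $ i) \<le> inverse s * (W *v (W *v z)) $ i" for i
    using s by (intro mult_left_mono) auto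
  ultimately show ?thesis
    using s by (simp add: collatz_wielandt_set_def s_def[symmetric] matrix_vector_mult_scaleR
                  sum_distrib_left[symmetric] algebra_simps)
qed

text \<open>The eigenvector is a fixed point of \<open>z \<mapsto> W z / \<Sum> (W z)\<close> on the compact convex set
  \<open>collatz_wielandt_set W c\<close>, which exists by Brouwer's theorem.\<close>

lemma nonneg_matrix_eigenvalue_ge:
  fixes W :: "real^'a::finite^'a"
  assumes nonneg: "\<And>i j. 0 \<le> W $ i $ j" and y: "\<And>i. 0 \<le> y $ i" "y \<noteq> 0" and "0 < c"
    and Wy: "\<And>i. c * y $ i \<le> (W *v y) $ i"
  obtains z \<mu> where "z \<noteq> 0" "W *v z = \<mu> *\<^sub>R z" "c \<le> \<mu>"
proof -
  let ?S = "collatz_wielandt_set W c"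
  define f where "f z = inverse (\<Sum>i\<in>UNIV. (W *v z) $ i) *\<^sub>R (W *v z)" for z
  define s where "s = (\<Sum>i\<in>UNIV. y $ i)"
  have "0 < s"
  proof -
    obtain k where "y $ k \<noteq> 0" using y by (auto simp: vec_eq_iff)
    then have "0 < y $ k" using y(1)[of k] by linarith
    also have "y $ k \<le> s" unfolding s_def using y by (intro member_le_sum) auto
    finally show ?thesis .
  qed
  then have "inverse s *\<^sub>R y \<in> ?S"
    using y Wy by (simp add: collatz_wielandt_set_def s_def[symmetric] sum_distrib_left[symmetric]
                    matrix_vector_mult_scaleR mult.left_commute[of c])
  then have "?S \<noteq> {}" by blast
  moreover have "continuous_on ?S f"
    unfolding f_def using collatz_wielandt_set_sum_ge \<open>0 < c\<close>
    by (intro continuous_intros matrix_vector_mult_linear_continuous_on continuous_on_component) force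
  moreover have "f ` ?S \<subseteq> ?S"
    using normalized_matrix_vector_mult_in_collatz_wielandt_set[OF nonneg \<open>0 < c\<close>] by (auto simp: f_def)
  ultimately obtain z where z: "z \<in> ?S" "f z = z"
    using brouwer[OF compact_collatz_wielandt_set convex_collatz_wielandt_set] by blast
  define \<mu> where "\<mu> = (\<Sum>i\<in>UNIV. (W *v z) $ i)"
  have "c \<le> \<mu>" using collatz_wielandt_set_sum_ge[OF z(1)] by (simp add: \<mu>_def)
  moreover have "W *v z = \<mu> *\<^sub>R z"
    using z(2) \<open>0 < c\<close> \<open>c \<le> \<mu>\<close> by (metis f_def \<mu>_def scaleR_scaleR right_inverse scaleR_one not_le order_less_le_trans)
  moreover have "z \<noteq> 0" using z(1) by (auto simp: collatz_wielandt_set_def)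
  ultimately show ?thesis using that by blast
qed

primrec matpow :: "'a::semiring_1^'n^'n \<Rightarrow> nat \<Rightarrow> 'a^'n::finite^'n" where
  "matpow W 0 = mat 1"
| "matpow W (Suc n) = W ** matpow W n"

lemma matpow_nonneg:
  fixes W :: "real^'n::finite^'n"
  assumes "\<And>i j. 0 \<le> W $ i $ j"
  shows "0 \<le> matpow W n $ i $ j"
  by (induction n arbitrary: i j) (simp_all add: mat_def matrix_matrix_mult_def assms sum_nonneg)

lemma matpow_entry_ge_1:
  fixes W :: "real^'n::finite^'n"
  assumes nonneg: "\<And>i j. 0 \<le> W $ i $ j" and chain: "\<And>i. i < n \<Longrightarrow> 1 \<le> W $ \<alpha> i $ \<alpha> (Suc i)"
  shows "1 \<le> matpow W n $ \<alpha> 0 $ \<alpha> n"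
  using chain
proof (induction n arbitrary: \<alpha>)
  case (Suc n)
  have "1 \<le> matpow W n $ \<alpha> 1 $ \<alpha> (Suc n)" "1 \<le> W $ \<alpha> 0 $ \<alpha> 1"
    using Suc.IH[of "\<lambda>i. \<alpha> (Suc i)"] Suc.prems[of 0] Suc.prems by simp_all
  then have "1 \<le> W $ \<alpha> 0 $ \<alpha> 1 * matpow W n $ \<alpha> 1 $ \<alpha> (Suc n)"
    using mult_mono[of 1 "W $ \<alpha> 0 $ \<alpha> 1" 1] by simp
  also have "\<dots> \<le> (\<Sum>k\<in>UNIV. W $ \<alpha> 0 $ k * matpow W n $ k $ \<alpha> (Suc n))"
    by (rule member_le_sum) (simp_all add: nonneg matpow_nonneg)
  finally show ?case by (simp add: matrix_matrix_mult_def)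
qed (simp add: mat_def)

lemma matpow_entry_ge_2:
  fixes W :: "real^'n::finite^'n"
  assumes nonneg: "\<And>i j. 0 \<le> W $ i $ j"
    and chain_\<alpha>: "\<And>i. i < n \<Longrightarrow> 1 \<le> W $ \<alpha> i $ \<alpha> (Suc i)"
    and chain_\<beta>: "\<And>i. i < n \<Longrightarrow> 1 \<le> W $ \<beta> i $ \<beta> (Suc i)"
    and "\<alpha> 0 = \<beta> 0" "\<alpha> n = \<beta> n" "i \<le> n" "\<alpha> i \<noteq> \<beta> i"
  shows "2 \<le> matpow W n $ \<alpha> 0 $ \<alpha> n"
  using assms(2-)
proof (induction n arbitrary: \<alpha> \<beta> i)
  case (Suc n)
  let ?f = "\<lambda>k. W $ \<alpha> 0 $ k * matpow W n $ k $ \<alpha> (Suc n)"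
  have f_nonneg: "0 \<le> ?f k" for k by (simp add: nonneg matpow_nonneg)
  have walk: "1 \<le> ?f (\<gamma> 1)"
    if "\<gamma> 0 = \<alpha> 0" "\<gamma> (Suc n) = \<alpha> (Suc n)" "\<And>i. i < Suc n \<Longrightarrow> 1 \<le> W $ \<gamma> i $ \<gamma> (Suc i)" for \<gamma>
  proof -
    have "1 \<le> matpow W n $ \<gamma> 1 $ \<alpha> (Suc n)" "1 \<le> W $ \<alpha> 0 $ \<gamma> 1"
      using matpow_entry_ge_1[OF nonneg, of n "\<lambda>i. \<gamma> (Suc i)"] that that(3)[of 0] by simp_all
    then show ?thesis using mult_mono[of 1 "W $ \<alpha> 0 $ \<gamma> 1" 1] by simp
  qed
  have walk_\<alpha>: "1 \<le> ?f (\<alpha> 1)" and walk_\<beta>: "1 \<le> ?f (\<beta> 1)"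
    using walk[of \<alpha>] walk[of \<beta>] Suc.prems by simp_all
  show ?case
  proof (cases "\<alpha> 1 = \<beta> 1")
    case True
    then obtain i' where "i = Suc i'" "i' \<le> n" using Suc.prems(3,5,6) by (cases i) auto
    then have "2 \<le> matpow W n $ \<alpha> 1 $ \<alpha> (Suc n)"
      using Suc.IH[of "\<lambda>i. \<alpha> (Suc i)" "\<lambda>i. \<beta> (Suc i)" i'] Suc.prems True by simp
    then have "2 \<le> ?f (\<alpha> 1)"
      using Suc.prems(1)[of 0] mult_mono[of 1 "W $ \<alpha> 0 $ \<alpha> 1" 2] by simp
    also have "\<dots> \<le> (\<Sum>k\<in>UNIV. ?f k)" by (rule member_le_sum) (simp_all add: f_nonneg)
    finally show ?thesis by (simp add: matrix_matrix_mult_def)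
  next
    case False
    have "2 \<le> (\<Sum>k\<in>{\<alpha> 1, \<beta> 1}. ?f k)" using walk_\<alpha> walk_\<beta> False by simp
    also have "\<dots> \<le> (\<Sum>k\<in>UNIV. ?f k)" by (rule sum_mono2) (simp_all add: f_nonneg)
    finally show ?thesis by (simp add: matrix_matrix_mult_def)
  qed
qed simp

text \<open>With \<open>c\<^sup>K = (W\<^sup>K)\<^sub>e\<^sub>e > 1\<close>, the vector \<open>y = \<Sum>\<^sub>j\<^sub><\<^sub>K W\<^sup>j e / c\<^sup>j\<close> satisfies \<open>W y \<ge> c y\<close>
  by telescoping, since \<open>W\<^sup>K e / c\<^sup>K \<ge> e\<close>.\<close>

lemma nonneg_matrix_eigenvalue_gt_1:
  fixes W :: "real^'n::finite^'n"
  assumes nonneg: "\<And>i j. 0 \<le> W $ i $ j" and "0 < K" and diag: "1 < matpow W K $ e $ e"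
  obtains z \<mu> where "z \<noteq> 0" "W *v z = \<mu> *\<^sub>R z" "1 < \<mu>"
proof -
  define c where "c = root K (matpow W K $ e $ e)"
  have c: "1 < c" "c ^ K = matpow W K $ e $ e"
    using \<open>0 < K\<close> diag by (simp_all add: c_def real_root_pow_pos)
  define G where "G j k = matpow W j $ k $ e / c ^ j" for j k
  define y where "y = (\<chi> k. \<Sum>j<K. G j k)"
  have G_nonneg: "0 \<le> G j k" for j k using c by (simp add: G_def matpow_nonneg[OF nonneg])
  have Wy: "(W *v y) $ i = c * (\<Sum>j<K. G (Suc j) i)" for i
  proof -
    have "(W *v y) $ i = (\<Sum>j<K. (\<Sum>k\<in>UNIV. W $ i $ k * matpow W j $ k $ e) / c ^ j)"
      by (simp add: matrix_vector_mult_def y_def G_def sum_distrib_left sum_divide_distrib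
            sum.swap[of _ UNIV] mult.commute)
    also have "\<dots> = (\<Sum>j<K. c * G (Suc j) i)"
      using c by (intro sum.cong) (auto simp: G_def matrix_matrix_mult_def field_simps)
    finally show ?thesis by (simp add: sum_distrib_left)
  qed
  have Wy_ge: "c * y $ i \<le> (W *v y) $ i" for i
  proof -
    have "G 0 i \<le> G K i"
      using c G_nonneg[of K i] diag by (cases "i = e") (simp_all add: G_def mat_def)
    then have "(\<Sum>j<K. G j i) \<le> (\<Sum>j<K. G (Suc j) i)"
      using sum_lessThan_telescope[of "\<lambda>j. G j i" K] by (simp add: sum_subtractf)
    then show ?thesis unfolding Wy using c by (simp add: y_def)
  qed
  have y_nonneg: "0 \<le> y $ i" for i by (simp add: y_def sum_nonneg G_nonneg)
  have "y \<noteq> 0"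
  proof -
    have "G 0 e \<le> y $ e" unfolding y_def by (simp, rule member_le_sum) (use \<open>0 < K\<close> G_nonneg in auto)
    then show ?thesis by (auto simp: G_def mat_def)
  qed
  moreover have "0 < c" using c by simp
  ultimately obtain z \<mu> where "z \<noteq> 0" "W *v z = \<mu> *\<^sub>R z" "c \<le> \<mu>"
    using nonneg_matrix_eigenvalue_ge[OF nonneg y_nonneg _ _ Wy_ge] by blast
  then show ?thesis using that c by simp
qed

section \<open>Closed walks and their flows\<close>

definition closed_walk :: "('n \<Rightarrow> 'n \<Rightarrow> bool) \<Rightarrow> 'n list \<Rightarrow> bool" where
  "closed_walk E vs \<longleftrightarrow> vs \<noteq> [] \<and> (\<forall>i < length vs. E (vs ! i) (vs ! (Suc i mod length vs)))"

definition nonbacktracking :: "'n list \<Rightarrow> bool" where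
  "nonbacktracking vs \<longleftrightarrow> (\<forall>i < length vs. vs ! (Suc (Suc i) mod length vs) \<noteq> vs ! i)"

definition arc_flow :: "'n::finite \<Rightarrow> 'n \<Rightarrow> real^('n \<times> 'n)" where
  "arc_flow a b = (\<chi> p. (if p = (a, b) then 1 else 0) - (if p = (b, a) then 1 else 0))"

fun walk_flow :: "'n::finite list \<Rightarrow> real^('n \<times> 'n)" where
  "walk_flow [] = 0"
| "walk_flow [x] = 0"
| "walk_flow (x # y # r) = arc_flow x y + walk_flow (y # r)"

definition closed_flow :: "'n::finite list \<Rightarrow> real^('n \<times> 'n)" where
  "closed_flow vs = walk_flow (vs @ [hd vs])"

lemma arc_flow_swap: "arc_flow b a = - arc_flow a b"
  by (auto simp: arc_flow_def vec_eq_iff)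

lemma walk_flow_append:
  "p \<noteq> [] \<Longrightarrow> q \<noteq> [] \<Longrightarrow> walk_flow (p @ q) = walk_flow p + arc_flow (last p) (hd q) + walk_flow q"
proof (induction p rule: walk_flow.induct)
  case (2 x)
  then show ?case by (cases q) auto
qed simp_all

lemma walk_flow_append_tl:
  "p \<noteq> [] \<Longrightarrow> last p = hd q \<Longrightarrow> walk_flow (p @ tl q) = walk_flow p + walk_flow q"
  by (cases q rule: walk_flow.cases) (simp_all add: walk_flow_append)

lemma walk_flow_conv_sum: "walk_flow p = (\<Sum>i < length p - 1. arc_flow (p ! i) (p ! Suc i))"
  by (induction p rule: walk_flow.induct) (simp_all add: sum.lessThan_Suc_shift del: sum.lessThan_Suc)

lemma nth_append_hd_mod:
  assumes "vs \<noteq> []" "i < length vs"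
  shows "(vs @ [hd vs]) ! Suc i = vs ! (Suc i mod length vs)"
proof (cases "Suc i < length vs")
  case False
  then have "Suc i = length vs" using assms(2) by simp
  then show ?thesis using assms(1) by (simp add: nth_append hd_conv_nth)
qed (simp add: nth_append)

lemma closed_flow_conv_sum:
  "vs \<noteq> [] \<Longrightarrow> closed_flow vs = (\<Sum>i < length vs. arc_flow (vs ! i) (vs ! (Suc i mod length vs)))"
  by (auto simp: closed_flow_def walk_flow_conv_sum nth_append nth_append_hd_mod[symmetric] intro!: sum.cong)

lemma closed_walk_iff_successively:
  "closed_walk E vs \<longleftrightarrow> vs \<noteq> [] \<and> successively E (vs @ [hd vs])"
proof (cases "vs = []")
  case False
  have "(\<forall>i < length vs. E (vs ! i) (vs ! (Suc i mod length vs))) \<longleftrightarrow>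
        (\<forall>i < length vs. E ((vs @ [hd vs]) ! i) ((vs @ [hd vs]) ! Suc i))"
    using False by (simp add: nth_append_hd_mod nth_append_left)
  then show ?thesis using False by (auto simp: closed_walk_def successively_conv_nth)
qed (simp add: closed_walk_def)

lemma closed_flow_rotate1: "closed_flow (rotate1 vs) = closed_flow vs"
proof (cases vs rule: walk_flow.cases)
  case (3 a b r)
  then have "closed_flow (rotate1 vs) = walk_flow ((b # r @ [a]) @ [b])" by (simp add: closed_flow_def)
  also have "\<dots> = closed_flow vs" using 3 by (subst walk_flow_append) (auto simp: closed_flow_def)
  finally show ?thesis .
qed auto

lemma closed_flow_rotate: "closed_flow (rotate n vs) = closed_flow vs"
  by (induction n) (simp_all add: rotate_Suc closed_flow_rotate1 del: rotate1.simps)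

lemma closed_walk_rotate1:
  assumes "closed_walk E vs"
  shows "closed_walk E (rotate1 vs)"
proof (cases "length vs \<ge> 2")
  case True
  then obtain a b r where vs: "vs = a # b # r" by (metis Suc_le_length_iff numeral_2_eq_2)
  then have "E a b" "successively E (b # r @ [a])"
    using assms by (auto simp: closed_walk_iff_successively)
  then have "successively E ((b # r @ [a]) @ [b])" by (subst successively_append_iff) auto
  then show ?thesis using vs by (simp add: closed_walk_iff_successively)
next
  case False
  then have "rotate1 vs = vs" by (cases vs) (auto simp: Suc_le_eq)
  then show ?thesis using assms by simp
qed

lemma closed_walk_rotate: "closed_walk E vs \<Longrightarrow> closed_walk E (rotate n vs)"
  by (induction n) (simp_all add: rotate_Suc closed_walk_rotate1 del: rotate1.simps)

lemma closed_walk_butlast: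
  fixes p :: "'n::finite list"
  assumes "successively E p" "2 \<le> length p" "last p = hd p"
  shows "closed_walk E (butlast p)" "hd (butlast p) = hd p" "closed_flow (butlast p) = walk_flow p"
proof -
  have "butlast p \<noteq> []" "hd (butlast p) = hd p" using assms(2) by (cases p; auto)+
  moreover have "butlast p @ [hd (butlast p)] = p"
    using calculation assms(3) by (metis append_butlast_last_id butlast.simps(1))
  ultimately show "closed_walk E (butlast p)" "hd (butlast p) = hd p" "closed_flow (butlast p) = walk_flow p"
    using assms(1) by (simp_all add: closed_walk_iff_successively closed_flow_def)
qed

lemma closed_flow_append:
  "vs \<noteq> [] \<Longrightarrow> ws \<noteq> [] \<Longrightarrow> hd ws = hd vs \<Longrightarrow> closed_flow (vs @ ws) = closed_flow vs + closed_flow ws"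
  by (simp add: closed_flow_def walk_flow_append flip: append_assoc)

lemma closed_walk_append:
  "closed_walk E vs \<Longrightarrow> closed_walk E ws \<Longrightarrow> hd ws = hd vs \<Longrightarrow> closed_walk E (vs @ ws)"
  by (auto simp: closed_walk_iff_successively successively_append_iff)

lemma length_concat_replicate [simp]: "length (concat (replicate k vs)) = k * length vs"
  by (induction k) simp_all

lemma nth_concat_replicate: "j < k * length vs \<Longrightarrow> concat (replicate k vs) ! j = vs ! (j mod length vs)"
proof (induction k arbitrary: j)
  case (Suc k)
  then show ?case
    by (cases "j < length vs") (simp_all add: nth_append mod_if)
qed simp

lemma nth_concat_replicate_mod:
  assumes "0 < k" "vs \<noteq> []"
  shows "concat (replicate k vs) ! (j mod (k * length vs)) = vs ! (j mod length vs)"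
  using assms by (simp add: nth_concat_replicate mod_mod_cancel)

lemma closed_flow_concat_replicate:
  "vs \<noteq> [] \<Longrightarrow> closed_flow (concat (replicate k vs)) = real k *\<^sub>R closed_flow vs"
proof (induction k)
  case (Suc k)
  show ?case
  proof (cases "k = 0")
    case False
    then obtain k' where "k = Suc k'" by (cases k) auto
    then have "closed_flow (concat (replicate (Suc k) vs)) = closed_flow vs + real k *\<^sub>R closed_flow vs"
      using Suc by (simp add: closed_flow_append)
    then show ?thesis by (simp add: scaleR_add_left)
  qed simp
qed (simp add: closed_flow_def)

lemma closed_walk_concat_replicate:
  assumes "closed_walk E vs" "0 < k"
  shows "closed_walk E (concat (replicate k vs))"
proof -
  have "vs \<noteq> []" using assms by (simp add: closed_walk_def)
  have "E (vs ! (i mod length vs)) (vs ! (Suc (i mod length vs) mod length vs))" for i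
    using assms(1) \<open>vs \<noteq> []\<close> by (simp add: closed_walk_def)
  then show ?thesis
    using nth_concat_replicate_mod[OF assms(2) \<open>vs \<noteq> []\<close>] \<open>vs \<noteq> []\<close> assms(2)
    by (auto simp: closed_walk_def nth_concat_replicate mod_Suc_eq)
qed

lemma nonbacktracking_concat_replicate:
  assumes "nonbacktracking vs" "vs \<noteq> []" "0 < k"
  shows "nonbacktracking (concat (replicate k vs))"
proof -
  have "vs ! ((i + 2) mod length vs) \<noteq> vs ! (i mod length vs)" for i
    using assms(1)[unfolded nonbacktracking_def, rule_format, of "i mod length vs"] assms(2)
      mod_add_left_eq[of i "length vs" 2] by simp
  then show ?thesis
    using nth_concat_replicate_mod[OF assms(3,2)] assms(2,3)
    by (auto simp: nonbacktracking_def nth_concat_replicate)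
qed

text \<open>Deleting a backtrack \<open>\<dots> a b a \<dots>\<close> from a closed walk keeps its flow, since
  \<open>arc_flow a b + arc_flow b a = 0\<close>. A closed walk of length 2 has flow 0, and loops are excluded,
  so this terminates in a nonbacktracking closed walk.\<close>

lemma shorter_closed_walk_of_backtrack:
  assumes loopless: "\<And>v. \<not> E v v"
    and vs: "closed_walk E vs" "closed_flow vs \<noteq> 0" "\<not> nonbacktracking vs"
  obtains ws where "closed_walk E ws" "closed_flow ws = closed_flow vs" "length ws < length vs"
proof -
  obtain i where i: "i < length vs" "vs ! ((i + 2) mod length vs) = vs ! i"
    using vs(3) by (auto simp: nonbacktracking_def)
  have "length vs \<noteq> 1"
    using vs(1) loopless unfolding closed_walk_def by auto
  moreover have "length vs \<noteq> 2"
  proof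
    assume "length vs = 2"
    then obtain a b where "vs = [a, b]" by (auto simp: length_Suc_conv numeral_2_eq_2)
    then show False using vs(2) arc_flow_swap[of b a] by (simp add: closed_flow_def)
  qed
  ultimately have "3 \<le> length vs" using i(1) by linarith
  then obtain a b c rest where us: "rotate i vs = a # b # c # rest"
    by (metis length_rotate Suc_le_length_iff numeral_3_eq_3)
  have "vs \<noteq> []" using i(1) by auto
  have "c = a"
    using us i \<open>3 \<le> length vs\<close> \<open>vs \<noteq> []\<close> nth_rotate[of 0 vs i] nth_rotate[of 2 vs i]
    by (simp add: add.commute)
  then have "closed_flow (rotate i vs) = arc_flow a b + arc_flow b a + closed_flow (a # rest)"
    using us by (simp add: closed_flow_def)
  then have "closed_flow (a # rest) = closed_flow vs"
    using arc_flow_swap[of b a] by (simp add: closed_flow_rotate)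
  moreover have "closed_walk E (a # rest)"
    using closed_walk_rotate[OF vs(1), of i] us \<open>c = a\<close>
    by (simp add: closed_walk_iff_successively)
  moreover have "length (a # rest) < length vs" using us by (metis length_rotate length_Cons lessI less_SucI)
  ultimately show ?thesis using that by blast
qed

lemma nonbacktracking_closed_walk_with_flow:
  assumes loopless: "\<And>v. \<not> E v v" and "closed_walk E vs" "closed_flow vs \<noteq> 0"
  obtains ws where "closed_walk E ws" "nonbacktracking ws" "closed_flow ws = closed_flow vs"
proof -
  have "\<exists>ws. closed_walk E ws \<and> nonbacktracking ws \<and> closed_flow ws = closed_flow vs"
    using assms(2,3)
  proof (induction "length vs" arbitrary: vs rule: less_induct)
    case less
    show ?case
    proof (cases "nonbacktracking vs")
      case False
      with less.prems obtain ws where "closed_walk E ws" "closed_flow ws = closed_flow vs" "length ws < length vs"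
        by (rule shorter_closed_walk_of_backtrack[OF loopless])
      then show ?thesis using less.hyps less.prems(2) by metis
    qed (use less.prems in blast)
  qed
  then show ?thesis using that by blast
qed

lemma nonbacktracking_closed_walk_length_ge_3:
  assumes "\<And>v. \<not> E v v" "closed_walk E vs" "nonbacktracking vs"
  shows "3 \<le> length vs"
proof -
  have "length vs \<noteq> 0" "length vs \<noteq> 1" using assms(1,2) by (auto simp: closed_walk_def)
  moreover have "length vs \<noteq> 2" using assms(3) by (auto simp: nonbacktracking_def dest: spec[of _ 0])
  ultimately show ?thesis by linarith
qed

section \<open>Flows of cycles of the undirectization\<close>

lemma independent_pair_iff:
  fixes a b :: "'a::real_vector"
  shows "independent {a, b} \<and> a \<noteq> b \<longleftrightarrow> (\<forall>p q. p *\<^sub>R a + q *\<^sub>R b = 0 \<longrightarrow> p = 0 \<and> q = 0)"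
proof
  assume ind: "independent {a, b} \<and> a \<noteq> b"
  show "\<forall>p q. p *\<^sub>R a + q *\<^sub>R b = 0 \<longrightarrow> p = 0 \<and> q = 0"
  proof (intro allI impI)
    fix p q :: real assume pq: "p *\<^sub>R a + q *\<^sub>R b = 0"
    define u where "u v = (if v = a then p else q)" for v
    have "b \<noteq> a" using ind by blast
    then have "(\<Sum>v\<in>{a, b}. u v *\<^sub>R v) = 0" using pq by (simp add: u_def)
    then have "\<forall>v\<in>{a, b}. u v = 0" using ind dependent_finite[of "{a, b}"] by blast
    then show "p = 0 \<and> q = 0" using ind by (auto simp: u_def)
  qed
next
  assume ind: "\<forall>p q. p *\<^sub>R a + q *\<^sub>R b = 0 \<longrightarrow> p = 0 \<and> q = 0"
  then have "a \<noteq> b" by (metis add.right_inverse scaleR_minus_left scaleR_one zero_neq_one)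
  moreover have "independent {a, b}"
  proof
    assume "dependent {a, b}"
    then obtain u where u: "\<exists>v\<in>{a, b}. u v \<noteq> 0" "(\<Sum>v\<in>{a, b}. u v *\<^sub>R v) = 0"
      using dependent_finite[of "{a, b}"] by blast
    then show False using ind \<open>a \<noteq> b\<close> by auto
  qed
  ultimately show "independent {a, b} \<and> a \<noteq> b" by blast
qed

lemma independent_pair_from_span:
  fixes V :: "'a::real_vector set"
  assumes "a \<in> span V" "b \<in> span V" "independent {a, b}" "a \<noteq> b"
  obtains u w where "u \<in> V" "w \<in> V" "independent {u, w}" "u \<noteq> w"
proof -
  obtain B where B: "B \<subseteq> V" "independent B" "V \<subseteq> span B" by (rule basis_exists)
  show ?thesis
  proof (cases "\<exists>u\<in>B. \<exists>w\<in>B. u \<noteq> w")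
    case True
    then show ?thesis using that B by (meson independent_mono empty_subsetI insert_subset subsetD)
  next
    case False
    then obtain u where "B \<subseteq> {u}" by blast
    then have "span V \<subseteq> span {u}" using B(3) by (metis span_mono span_span subset_trans)
    then have "{a, b} \<subseteq> span {u}" using assms(1,2) by blast
    then have "card {a, b} \<le> card {u}" using independent_span_bound assms(3) by blast
    then show ?thesis using assms(4) by simp
  qed
qed

lemma path_of_rtranclp:
  assumes "E\<^sup>*\<^sup>* u v"
  obtains p where "p \<noteq> []" "hd p = u" "last p = v" "successively E p"
  using assms
proof (induction arbitrary: thesis rule: rtranclp_induct)
  case base
  show ?case using base.prems[of "[u]"] by simp
next
  case (step y z)
  then obtain p where p: "p \<noteq> []" "hd p = u" "last p = y" "successively E p" by blast
  then have "successively E (p @ [z])" using step by (simp add: successively_append_iff)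
  then show ?case using step.prems[of "p @ [z]"] p by simp
qed

lemma sum_lessThan_Suc_mod:
  fixes h :: "nat \<Rightarrow> 'a::comm_monoid_add"
  shows "(\<Sum>i<n. h (Suc i mod n)) = (\<Sum>i<n. h i)"
proof (cases n)
  case (Suc m)
  have "(\<Sum>i<Suc m. h (Suc i mod Suc m)) = (\<Sum>i<m. h (Suc i mod Suc m)) + h 0" by simp
  also have "\<dots> = (\<Sum>i<m. h (Suc i)) + h 0" by (simp add: atLeast0LessThan[symmetric])
  also have "\<dots> = (\<Sum>i<Suc m. h i)" by (subst sum.lessThan_Suc_shift) (rule add.commute)
  finally show ?thesis using Suc by simp
qed simp

definition loop_flows :: "('n::finite \<Rightarrow> 'n \<Rightarrow> bool) \<Rightarrow> 'n \<Rightarrow> (real^('n \<times> 'n)) set" where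
  "loop_flows E x = {walk_flow p | p. p \<noteq> [] \<and> successively E p \<and> hd p = x \<and> last p = x}"

lemma arc_flow_in_span_loop_flows:
  assumes "E u v"
    and p: "p \<noteq> []" "successively E p" "hd p = x" "last p = u"
    and q: "q \<noteq> []" "successively E q" "hd q = x" "last q = v"
    and r: "r \<noteq> []" "successively E r" "hd r = v" "last r = x"
  shows "arc_flow u v + walk_flow p - walk_flow q \<in> span (loop_flows E x)"
proof -
  have "walk_flow (p @ r) \<in> loop_flows E x"
    using p r \<open>E u v\<close> unfolding loop_flows_def by (auto simp: successively_append_iff)
  moreover have "walk_flow (q @ tl r) \<in> loop_flows E x"
  proof -
    obtain r' where r': "r = v # r'" using r by (cases r) auto
    then have "successively E (q @ r')" using q r by (auto simp: successively_append_iff successively_Cons)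
    moreover have "last (q @ r') = x" using q r r' by (cases "r' = []") auto
    ultimately show ?thesis using q r' unfolding loop_flows_def by auto
  qed
  moreover have "arc_flow u v + walk_flow p - walk_flow q = walk_flow (p @ r) - walk_flow (q @ tl r)"
    using p q r by (simp add: walk_flow_append walk_flow_append_tl)
  ultimately show ?thesis by (simp add: span_diff span_base)
qed

text \<open>Strong connectivity lets every edge u v of the undirectization be closed up through the base
  point x, up to the gradient \<open>\<phi> u - \<phi> v\<close> of a potential; around a cycle the gradients cancel.\<close>

lemma closed_flow_in_span_loop_flows:
  assumes sc: "strongly_connected E" and "c \<noteq> []"
    and c: "\<And>i. i < length c \<Longrightarrow> und_adj E (c ! i) (c ! (Suc i mod length c))"
  shows "closed_flow c \<in> span (loop_flows E x)"
proof -
  have "\<exists>p. p \<noteq> [] \<and> hd p = u \<and> last p = v \<and> successively E p" for u v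
    using sc path_of_rtranclp[of E u v] by (metis strongly_connected_def)
  then obtain path where path: "\<And>u v. path u v \<noteq> [] \<and> hd (path u v) = u \<and> last (path u v) = v
                                    \<and> successively E (path u v)"
    by metis
  define \<phi> where "\<phi> u = walk_flow (path x u)" for u
  have arc: "arc_flow u v + \<phi> u - \<phi> v \<in> span (loop_flows E x)" if "und_adj E u v" for u v
  proof (cases "E u v")
    case True
    then show ?thesis
      unfolding \<phi>_def using path[of x u] path[of x v] path[of v x]
      by (intro arc_flow_in_span_loop_flows[of E u v "path x u" x "path x v" "path v x"]) auto
  next
    case False
    then have "E v u" using that by (simp add: und_adj_def)
    then have "arc_flow v u + \<phi> v - \<phi> u \<in> span (loop_flows E x)"
      unfolding \<phi>_def using path[of x u] path[of x v] path[of u x]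
      by (intro arc_flow_in_span_loop_flows[of E v u "path x v" x "path x u" "path u x"]) auto
    moreover have "arc_flow u v + \<phi> u - \<phi> v = - (arc_flow v u + \<phi> v - \<phi> u)"
      using arc_flow_swap[of v u] by simp
    ultimately show ?thesis using span_neg by metis
  qed
  define L where "L = length c"
  have "closed_flow c = (\<Sum>i<L. arc_flow (c ! i) (c ! (Suc i mod L)) + \<phi> (c ! i) - \<phi> (c ! (Suc i mod L)))"
    using \<open>c \<noteq> []\<close> sum_lessThan_Suc_mod[of "\<lambda>i. \<phi> (c ! i)" L]
    by (simp add: closed_flow_conv_sum L_def sum.distrib sum_subtractf)
  also have "\<dots> \<in> span (loop_flows E x)" using c by (intro span_sum arc) (simp add: L_def)
  finally show ?thesis .
qed

lemma closed_walk_of_loop_flow: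
  assumes "y \<in> loop_flows E x" "y \<noteq> 0"
  obtains P where "closed_walk E P" "hd P = x" "closed_flow P = y"
proof -
  obtain p where p: "y = walk_flow p" "p \<noteq> []" "successively E p" "hd p = x" "last p = x"
    using assms(1) unfolding loop_flows_def by blast
  have "length p \<noteq> 1" using p assms(2) by (cases p) auto
  moreover have "length p \<noteq> 0" using p(2) by simp
  ultimately have "2 \<le> length p" by linarith
  then show ?thesis using closed_walk_butlast[OF p(3) _ p(5)[folded p(4)]] that p by simp
qed

definition cycle_edge :: "'a list \<Rightarrow> 'a \<Rightarrow> 'a \<Rightarrow> bool" where
  "cycle_edge a x y \<longleftrightarrow> (\<exists>i < length a. x = a ! i \<and> y = a ! (Suc i mod length a)
                                         \<or> y = a ! i \<and> x = a ! (Suc i mod length a))"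

definition cyc_nth :: "'a list \<Rightarrow> int \<Rightarrow> 'a" where
  "cyc_nth a k = a ! nat (k mod int (length a))"

lemma cyc_nth_of_nat: "cyc_nth a (int i) = a ! (i mod length a)"
  by (simp add: cyc_nth_def flip: of_nat_mod)

lemma cyc_nth_eq_iff:
  assumes "distinct a" "a \<noteq> []"
  shows "cyc_nth a x = cyc_nth a y \<longleftrightarrow> int (length a) dvd x - y"
proof -
  have "nat (x mod int (length a)) < length a" "nat (y mod int (length a)) < length a"
    using assms(2) by (simp_all add: nat_less_iff)
  then have "cyc_nth a x = cyc_nth a y \<longleftrightarrow> x mod int (length a) = y mod int (length a)"
    using assms(2) unfolding cyc_nth_def by (auto simp: nth_eq_iff_index_eq[OF assms(1)] nat_eq_iff2)
  then show ?thesis by (simp add: mod_eq_dvd_iff)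
qed

lemma cycle_edge_cyc_nth:
  assumes "distinct a" "cycle_edge a (cyc_nth a k) y"
  shows "y = cyc_nth a (k + 1) \<or> y = cyc_nth a (k - 1)"
proof -
  have "a \<noteq> []" using assms(2) by (auto simp: cycle_edge_def)
  note eq = cyc_nth_eq_iff[OF assms(1) this]
  obtain i where i: "i < length a" "cyc_nth a k = a ! i \<and> y = a ! (Suc i mod length a)
                  \<or> y = a ! i \<and> cyc_nth a k = a ! (Suc i mod length a)"
    using assms(2) unfolding cycle_edge_def by blast
  have "a ! i = cyc_nth a (int i)" "a ! (Suc i mod length a) = cyc_nth a (int i + 1)"
    using cyc_nth_of_nat[of a i] cyc_nth_of_nat[of a "Suc i"] i(1) by (simp_all add: add.commute)
  with i(2) have "cyc_nth a k = cyc_nth a (int i) \<and> y = cyc_nth a (int i + 1)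
                  \<or> y = cyc_nth a (int i) \<and> cyc_nth a k = cyc_nth a (int i + 1)"
    by simp
  then show ?thesis
  proof (elim disjE conjE)
    assume "cyc_nth a k = cyc_nth a (int i)" "y = cyc_nth a (int i + 1)"
    then show ?thesis by (simp add: eq dvd_diff_commute)
  next
    assume "y = cyc_nth a (int i)" "cyc_nth a k = cyc_nth a (int i + 1)"
    then have "int (length a) dvd (k - 1) - int i" by (simp add: eq algebra_simps)
    then show ?thesis using \<open>y = cyc_nth a (int i)\<close> by (simp add: eq dvd_diff_commute)
  qed
qed

lemma cycle_edge_cyc_nth_ex:
  assumes "cycle_edge a x y"
  obtains k where "x = cyc_nth a k"
proof -
  obtain i where "i < length a" "x = a ! i \<or> x = a ! (Suc i mod length a)"
    using assms by (auto simp: cycle_edge_def)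
  moreover have "Suc i mod length a < length a" by (rule mod_less_divisor) (use \<open>i < length a\<close> in linarith)
  ultimately have "x \<in> set a" using nth_mem by metis
  then obtain i where "i < length a" "x = a ! i" by (auto simp: in_set_conv_nth)
  then show ?thesis using that[of "int i"] by (simp add: cyc_nth_of_nat)
qed

lemma cycle_progression:
  assumes a: "distinct a" and b: "distinct b" "3 \<le> length b"
    and edges: "\<And>j. j < length b \<Longrightarrow> cycle_edge a (b ! j) (b ! (Suc j mod length b))"
  obtains s d where "d = 1 \<or> d = -1" "\<And>k. k < length b \<Longrightarrow> b ! k = cyc_nth a (s + d * int k)"
proof -
  have "b \<noteq> []" using b(2) by auto
  then have edge1: "cycle_edge a (b ! 0) (b ! 1)" using edges[of 0] b(2) by simp
  then obtain s where s: "b ! 0 = cyc_nth a s" by (rule cycle_edge_cyc_nth_ex)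
  obtain d where d: "d = 1 \<or> d = -1" "b ! 1 = cyc_nth a (s + d)"
    using cycle_edge_cyc_nth[OF a edge1[unfolded s]] by (metis diff_conv_add_uminus)
  have step: "Suc k < length b \<Longrightarrow> b ! k = cyc_nth a (s + d * int k) \<and> b ! Suc k = cyc_nth a (s + d * int (Suc k))" for k
  proof (induction k)
    case (Suc k)
    then have IH: "b ! k = cyc_nth a (s + d * int k)" "b ! Suc k = cyc_nth a (s + d * int k + d)"
      by (simp_all add: algebra_simps)
    have "cycle_edge a (b ! Suc k) (b ! Suc (Suc k))" using edges[of "Suc k"] Suc.prems by simp
    then have succ: "b ! Suc (Suc k) = cyc_nth a (s + d * int k + d + 1) \<or>
                     b ! Suc (Suc k) = cyc_nth a (s + d * int k + d - 1)"
      using cycle_edge_cyc_nth[OF a] IH(2) by metis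
    have "b ! Suc (Suc k) \<noteq> b ! k" using b(1) Suc.prems by (simp add: nth_eq_iff_index_eq)
    then have "b ! Suc (Suc k) = cyc_nth a (s + d * int k + 2 * d)"
      using succ d(1) IH(1) by (auto simp: algebra_simps)
    then show ?case using IH(2) by (simp add: algebra_simps)
  next
    case 0
    have "1 < length b" using b(2) by linarith
    then show ?case using s d by simp
  qed
  have "b ! k = cyc_nth a (s + d * int k)" if "k < length b" for k
    using s step that by (cases k) simp_all
  with d(1) show ?thesis using that by blast
qed

lemma nth_rotate_cyc_nth: "j < length a \<Longrightarrow> rotate k a ! j = cyc_nth a (int k + int j)"
  by (metis nth_rotate cyc_nth_of_nat of_nat_add add.commute)

lemma length_eq_of_cycle_progression:
  assumes a: "distinct a" and b: "distinct b" "3 \<le> length b"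
    and edges: "\<And>j. j < length b \<Longrightarrow> cycle_edge a (b ! j) (b ! (Suc j mod length b))"
    and d: "d = 1 \<or> d = -1" and bk: "\<And>k. k < length b \<Longrightarrow> b ! k = cyc_nth a (s + d * int k)"
  shows "length b = length a"
proof -
  define m where "m = length a"
  define l where "l = length b"
  have "b \<noteq> []" using b(2) by auto
  then have "a \<noteq> []" using edges[of 0] by (auto simp: cycle_edge_def)
  note eq = cyc_nth_eq_iff[OF a this, folded m_def]
  have "l \<le> m"
  proof (rule ccontr)
    assume "\<not> l \<le> m"
    then have "b ! m = b ! 0" using bk[of m] bk[of 0] \<open>b \<noteq> []\<close> by (simp add: eq l_def)
    moreover have "m < length b" using \<open>\<not> l \<le> m\<close> by (simp add: l_def)
    moreover have "0 < length b" using calculation(2) by linarith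
    ultimately show False using nth_eq_iff_index_eq[OF b(1), of m 0] \<open>a \<noteq> []\<close> by (simp add: m_def)
  qed
  have "Suc (l - 1) = l" "int (l - 1) = int l - 1" using b(2) by (auto simp: l_def)
  then have "l - 1 < l" "Suc (l - 1) mod l = 0" by simp_all
  then have "cycle_edge a (cyc_nth a (s + d * (int l - 1))) (cyc_nth a s)"
    using edges[of "l - 1"] bk[of "l - 1"] bk[of 0] \<open>Suc (l - 1) = l\<close> \<open>b \<noteq> []\<close>
      \<open>int (l - 1) = int l - 1\<close>
    by (simp add: l_def)
  then have "int m dvd s - (s + d * (int l - 1) + 1) \<or> int m dvd s - (s + d * (int l - 1) - 1)"
    using cycle_edge_cyc_nth[OF a] by (metis eq)
  then have "int m dvd int l \<or> int m dvd int l - 2"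
    using d by (auto simp: algebra_simps dvd_diff_commute)
  moreover have "\<not> int m dvd int l - 2"
  proof
    assume "int m dvd int l - 2"
    then have "int m \<le> int l - 2" by (rule zdvd_imp_le) (use b(2) in \<open>simp add: l_def\<close>)
    then show False using \<open>l \<le> m\<close> by linarith
  qed
  ultimately have "m dvd l" by simp
  moreover have "0 < l" using b(2) unfolding l_def by linarith
  ultimately show ?thesis using \<open>l \<le> m\<close> by (simp add: l_def m_def dvd_imp_le le_antisym)
qed

lemma cycle_equiv_of_progression:
  assumes "distinct a" "a \<noteq> []" and len: "length b = length a"
    and d: "d = 1 \<or> d = -1" and bk: "\<And>k. k < length b \<Longrightarrow> b ! k = cyc_nth a (s + d * int k)"
  shows "cycle_equiv a b"
  using d
proof
  define m where "m = length a"
  note eq = cyc_nth_eq_iff[OF assms(1,2), folded m_def]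
  assume "d = 1"
  have "b = rotate (nat (s mod int m)) a"
  proof (rule nth_equalityI)
    fix j assume "j < length b"
    then show "b ! j = rotate (nat (s mod int m)) a ! j"
      using \<open>d = 1\<close> len \<open>a \<noteq> []\<close> bk[of j]
      by (simp add: m_def nth_rotate_cyc_nth eq mod_eq_dvd_iff[symmetric] mod_add_left_eq)
  qed (simp add: len)
  then show ?thesis by (auto simp: cycle_equiv_def)
next
  define m where "m = length a"
  note eq = cyc_nth_eq_iff[OF assms(1,2), folded m_def]
  assume "d = -1"
  define k where "k = nat ((s + 1) mod int m)"
  have k: "int k = (s + 1) mod int m" using \<open>a \<noteq> []\<close> by (simp add: k_def m_def)
  have "b = rev (rotate k a)"
  proof (rule nth_equalityI)
    fix j assume j: "j < length b"
    then have "int (m - Suc j) = int m - 1 - int j" using len by (simp add: m_def of_nat_diff)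
    then have "s + d * int j - (int k + int (m - Suc j)) = ((s + 1) - (s + 1) mod int m) - int m"
      using \<open>d = -1\<close> by (simp add: k)
    moreover have "int m dvd ((s + 1) - (s + 1) mod int m) - int m" by (simp add: dvd_minus_mod)
    ultimately have "int m dvd s + d * int j - (int k + int (m - Suc j))" by metis
    then show "b ! j = rev (rotate k a) ! j"
      using j len bk[of j] by (simp add: m_def rev_nth nth_rotate_cyc_nth eq)
  qed (simp add: len)
  then show ?thesis by (auto simp: cycle_equiv_def)
qed

lemma cycle_equiv_of_edges:
  assumes a: "distinct a" and b: "distinct b" "3 \<le> length b"
    and edges: "\<And>j. j < length b \<Longrightarrow> cycle_edge a (b ! j) (b ! (Suc j mod length b))"
  shows "cycle_equiv a b"
proof -
  obtain s d where d: "d = 1 \<or> d = -1" and bk: "\<And>k. k < length b \<Longrightarrow> b ! k = cyc_nth a (s + d * int k)"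
    using cycle_progression[OF a b edges] by metis
  have "b \<noteq> []" using b(2) by auto
  then have "a \<noteq> []" using edges[of 0] by (auto simp: cycle_edge_def)
  with d bk show ?thesis
    using cycle_equiv_of_progression[OF a] length_eq_of_cycle_progression[OF a b edges] by blast
qed

lemma Suc_Suc_mod_neq:
  assumes "i < n" "3 \<le> n"
  shows "Suc (Suc i) mod n \<noteq> i"
proof (cases "Suc (Suc i) < n")
  case False
  then have "Suc (Suc i) = n \<or> Suc (Suc i) = Suc n" using assms(1) by linarith
  then show ?thesis using assms by (auto simp: mod_Suc)
qed simp

lemma closed_flow_cycle_edge:
  assumes c: "distinct c" "3 \<le> length c" and "i < length c"
  shows "closed_flow c $ (c ! i, c ! (Suc i mod length c)) = 1"
proof -
  define L where "L = length c"
  have "c \<noteq> []" using c(2) by auto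
  have ij: "(c ! i = c ! j) = (i = j)" if "j < L" for j
    using c(1) that \<open>i < length c\<close> by (simp add: L_def nth_eq_iff_index_eq)
  have entry: "arc_flow (c ! j) (c ! (Suc j mod L)) $ (c ! i, c ! (Suc i mod L)) = (if j = i then 1 else 0)"
    if "j < L" for j
  proof -
    have "\<not> (i = Suc j mod L \<and> Suc i mod L = j)"
    proof
      assume "i = Suc j mod L \<and> Suc i mod L = j"
      then have "Suc (Suc j) mod L = j" by (metis mod_Suc_eq)
      then show False using Suc_Suc_mod_neq[of j L] that c(2) by (simp add: L_def)
    qed
    then show ?thesis
      using ij[OF that] ij[of "Suc j mod L"] c(1) that \<open>i < length c\<close> \<open>c \<noteq> []\<close>
      by (auto simp: arc_flow_def L_def nth_eq_iff_index_eq)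
  qed
  have "closed_flow c $ (c ! i, c ! (Suc i mod L)) =
          (\<Sum>j<L. arc_flow (c ! j) (c ! (Suc j mod L)) $ (c ! i, c ! (Suc i mod L)))"
    using \<open>c \<noteq> []\<close> by (simp add: closed_flow_conv_sum L_def)
  also have "\<dots> = (\<Sum>j<L. if j = i then 1 else 0)" by (rule sum.cong) (simp_all add: entry)
  also have "\<dots> = 1" using \<open>i < length c\<close> by (simp add: L_def)
  finally show ?thesis by (simp add: L_def)
qed

lemma cycle_edge_of_closed_flow:
  assumes "c \<noteq> []" "closed_flow c $ (u, v) \<noteq> 0"
  shows "cycle_edge c u v"
proof (rule ccontr)
  assume "\<not> cycle_edge c u v"
  have "arc_flow (c ! j) (c ! (Suc j mod length c)) $ (u, v) = 0" if "j < length c" for j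
  proof -
    have "((u, v) = (c ! j, c ! (Suc j mod length c))) = False"
         "((u, v) = (c ! (Suc j mod length c), c ! j)) = False"
      using that \<open>\<not> cycle_edge c u v\<close> unfolding cycle_edge_def by blast+
    then show ?thesis by (simp only: arc_flow_def vec_lambda_beta if_False diff_self)
  qed
  then have "closed_flow c $ (u, v) = 0"
    using assms(1) by (simp add: closed_flow_conv_sum)
  then show False using assms(2) by simp
qed

text \<open>A nonzero combination \<open>p f\<^sub>1 + q f\<^sub>2 = 0\<close> of two cycle flows puts every edge of the
  second cycle on the first, which forces the cycles to coincide.\<close>

lemma independent_closed_flows_cycles:
  assumes c1: "is_cycle E c1" and c2: "is_cycle E c2" and "\<not> cycle_equiv c1 c2"
  shows "independent {closed_flow c1, closed_flow c2} \<and> closed_flow c1 \<noteq> closed_flow c2"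
  unfolding independent_pair_iff
proof (intro allI impI)
  fix p q :: real
  assume pq: "p *\<^sub>R closed_flow c1 + q *\<^sub>R closed_flow c2 = 0"
  have l1: "distinct c1" "3 \<le> length c1" and l2: "distinct c2" "3 \<le> length c2"
    using c1 c2 by (auto simp: is_cycle_def)
  have comp: "p * closed_flow c1 $ e + q * closed_flow c2 $ e = 0" for e
    using arg_cong[OF pq, of "\<lambda>v. v $ e"] by simp
  have "q = 0"
  proof (rule ccontr)
    assume "q \<noteq> 0"
    have edge2: "closed_flow c2 $ (c2 ! j, c2 ! (Suc j mod length c2)) = 1" if "j < length c2" for j
      using closed_flow_cycle_edge[OF l2 that] .
    have "0 < length c2" using l2 by linarith
    then have "p \<noteq> 0" using comp edge2[of 0] \<open>q \<noteq> 0\<close> by force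
    have "cycle_edge c1 (c2 ! j) (c2 ! (Suc j mod length c2))" if "j < length c2" for j
      using comp[of "(c2 ! j, c2 ! (Suc j mod length c2))"] edge2[OF that] \<open>q \<noteq> 0\<close> l1(2)
      by (intro cycle_edge_of_closed_flow) auto
    then have "cycle_equiv c1 c2" by (rule cycle_equiv_of_edges[OF l1(1) l2])
    then show False using \<open>\<not> cycle_equiv c1 c2\<close> by simp
  qed
  moreover have "0 < length c1" using l1 by linarith
  then have "p = 0 \<or> q \<noteq> 0" using comp closed_flow_cycle_edge[OF l1, of 0] by force
  ultimately show "p = 0 \<and> q = 0" by simp
qed

section \<open>Two nonbacktracking closed walks\<close>

lemma closed_walks_with_independent_flows:
  assumes sc: "strongly_connected E" and c1: "is_cycle E c1" and c2: "is_cycle E c2"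
    and ind: "independent {closed_flow c1, closed_flow c2}" "closed_flow c1 \<noteq> closed_flow c2"
  obtains P1 P2 where "closed_walk E P1" "closed_walk E P2" "hd P2 = hd P1"
    "independent {closed_flow P1, closed_flow P2}" "closed_flow P1 \<noteq> closed_flow P2"
proof -
  fix x
  have "closed_flow c \<in> span (loop_flows E x)" if "is_cycle E c" for c
    using that by (intro closed_flow_in_span_loop_flows[OF sc]) (auto simp: is_cycle_def)
  then obtain u w where uw: "u \<in> loop_flows E x" "w \<in> loop_flows E x" "independent {u, w}" "u \<noteq> w"
    using independent_pair_from_span[OF _ _ ind] c1 c2 by metis
  then have "u \<noteq> 0" "w \<noteq> 0" using dependent_zero by blast+
  then obtain P1 P2 where "closed_walk E P1" "hd P1 = x" "closed_flow P1 = u"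
    "closed_walk E P2" "hd P2 = x" "closed_flow P2 = w"
    using closed_walk_of_loop_flow uw(1,2) by metis
  then show ?thesis using that uw by simp
qed

lemma nonbacktracking_closed_walks_with_flows:
  assumes loopless: "\<And>v. \<not> E v v" and P: "closed_walk E P1" "closed_walk E P2" "hd P2 = hd P1"
    and ind: "independent {closed_flow P1, closed_flow P2}" "closed_flow P1 \<noteq> closed_flow P2"
  obtains f where "\<And>n. closed_walk E (f n) \<and> nonbacktracking (f n)
                         \<and> closed_flow (f n) = closed_flow P1 + real n *\<^sub>R closed_flow P2"
proof -
  have ne: "P1 \<noteq> []" "P2 \<noteq> []" using P by (auto simp: closed_walk_def)
  have "\<exists>\<omega>. closed_walk E \<omega> \<and> nonbacktracking \<omega> \<and> closed_flow \<omega> = closed_flow P1 + real n *\<^sub>R closed_flow P2"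
    for n
  proof -
    define \<psi> where "\<psi> = P1 @ concat (replicate n P2)"
    have "closed_walk E \<psi> \<and> closed_flow \<psi> = closed_flow P1 + real n *\<^sub>R closed_flow P2"
    proof (cases "n = 0")
      case False
      then have hd: "hd (concat (replicate n P2)) = hd P1" using P(3) ne by (cases n) simp_all
      have "concat (replicate n P2) \<noteq> []" using ne False by simp
      then show ?thesis
        using closed_walk_append[OF P(1) closed_walk_concat_replicate[OF P(2)] hd] False
          closed_flow_append[OF ne(1) _ hd] closed_flow_concat_replicate[OF ne(2)]
        by (simp add: \<psi>_def)
    qed (simp add: \<psi>_def P(1))
    moreover have "closed_flow P1 + real n *\<^sub>R closed_flow P2 \<noteq> 0"
    proof
      assume "closed_flow P1 + real n *\<^sub>R closed_flow P2 = 0"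
      then have "1 *\<^sub>R closed_flow P1 + real n *\<^sub>R closed_flow P2 = 0" by simp
      then show False using ind independent_pair_iff by (metis zero_neq_one)
    qed
    ultimately show ?thesis by (metis nonbacktracking_closed_walk_with_flow[of E, OF loopless])
  qed
  then show ?thesis using that by metis
qed

text \<open>Pigeonhole on the first arc gives \<open>n \<noteq> m\<close> with walks starting alike; repeating each
  \<open>length\<close>-of-the-other times equalizes the lengths, and the flows stay different.\<close>

lemma nonbacktracking_closed_walks_same_start:
  assumes loopless: "\<And>v. \<not> E v v" and P: "closed_walk E P1" "closed_walk E P2" "hd P2 = hd P1"
    and ind: "independent {closed_flow P1, closed_flow P2}" "closed_flow P1 \<noteq> closed_flow P2"
  obtains vs ws :: "'n::finite list" where "length vs = length ws" "2 \<le> length vs"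
    "closed_walk E vs" "closed_walk E ws" "nonbacktracking vs" "nonbacktracking ws"
    "vs ! 0 = ws ! 0" "vs ! 1 = ws ! 1" "vs \<noteq> ws"
proof -
  obtain f where f: "\<And>n. closed_walk E (f n) \<and> nonbacktracking (f n)
                           \<and> closed_flow (f n) = closed_flow P1 + real n *\<^sub>R closed_flow P2"
    using nonbacktracking_closed_walks_with_flows[OF assms] by blast
  have len: "3 \<le> length (f n)" for n using nonbacktracking_closed_walk_length_ge_3[of E, OF loopless] f by blast
  have "\<not> inj_on (\<lambda>n. (f n ! 0, f n ! 1)) {..CARD('n \<times> 'n)}"
  proof
    assume "inj_on (\<lambda>n. (f n ! 0, f n ! 1)) {..CARD('n \<times> 'n)}"
    then have "card ((\<lambda>n. (f n ! 0, f n ! 1)) ` {..CARD('n \<times> 'n)}) = Suc CARD('n \<times> 'n)"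
      by (simp add: card_image)
    then show False using card_mono[of UNIV "(\<lambda>n. (f n ! 0, f n ! 1)) ` {..CARD('n \<times> 'n)}"] by simp
  qed
  then obtain n m where nm: "n \<noteq> m" "f n ! 0 = f m ! 0" "f n ! 1 = f m ! 1" by (auto simp: inj_on_def)
  define vs where "vs = concat (replicate (length (f m)) (f n))"
  define ws where "ws = concat (replicate (length (f n)) (f m))"
  have ne: "f n \<noteq> []" "f m \<noteq> []" using len[of n] len[of m] by auto
  have "3 * 3 \<le> length (f m) * length (f n)" using len by (intro mult_le_mono)
  then have lengths: "0 < length (f m) * length (f n)" "1 < length (f m) * length (f n)" by linarith+
  then have "2 \<le> length vs" by (simp add: vs_def)
  moreover have "vs ! 0 = f n ! 0" "vs ! 1 = f n ! 1" "ws ! 0 = f m ! 0" "ws ! 1 = f m ! 1"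
    using len[of n] len[of m] lengths by (simp_all add: vs_def ws_def nth_concat_replicate mult.commute)
  moreover have "vs \<noteq> ws"
  proof
    assume "vs = ws"
    moreover have "closed_flow vs = real (length (f m)) *\<^sub>R closed_flow (f n)"
      "closed_flow ws = real (length (f n)) *\<^sub>R closed_flow (f m)"
      using ne by (simp_all add: vs_def ws_def closed_flow_concat_replicate)
    ultimately have "real (length (f m)) *\<^sub>R (closed_flow P1 + real n *\<^sub>R closed_flow P2) =
               real (length (f n)) *\<^sub>R (closed_flow P1 + real m *\<^sub>R closed_flow P2)"
      using f by simp
    then have "(real (length (f m)) - real (length (f n))) *\<^sub>R closed_flow P1 +
        (real (length (f m)) * real n - real (length (f n)) * real m) *\<^sub>R closed_flow P2 = 0"
      by (simp add: algebra_simps)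
    moreover have "\<forall>p q. p *\<^sub>R closed_flow P1 + q *\<^sub>R closed_flow P2 = 0 \<longrightarrow> p = 0 \<and> q = 0"
      using ind independent_pair_iff by blast
    ultimately have "real (length (f m)) - real (length (f n)) = 0"
      "real (length (f m)) * real n - real (length (f n)) * real m = 0"
      by blast+
    then show False using nm(1) len[of n] by simp
  qed
  ultimately show ?thesis
    using that[of vs ws] f nm ne
    by (simp add: vs_def ws_def closed_walk_concat_replicate nonbacktracking_concat_replicate)
qed

lemma nb_matrix_along_nonbacktracking_walk:
  assumes "closed_walk E xs" "nonbacktracking xs"
  defines "L \<equiv> length xs"
  shows "1 \<le> nb_matrix E \<tau> $ (xs ! (i mod L), xs ! (Suc i mod L)) $ (xs ! (Suc i mod L), xs ! (Suc (Suc i) mod L))"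
proof -
  have "0 < L" using assms(1) by (simp add: closed_walk_def L_def)
  have "E (xs ! (j mod L)) (xs ! (Suc j mod L))" for j
    using assms(1) \<open>0 < L\<close> unfolding closed_walk_def L_def by (metis mod_less_divisor mod_Suc_eq)
  moreover have "xs ! (Suc (Suc i) mod L) \<noteq> xs ! (i mod L)"
    using assms(2) \<open>0 < L\<close> unfolding nonbacktracking_def L_def by (metis mod_less_divisor mod_Suc_eq)
  ultimately show ?thesis by (simp add: nb_matrix_def)
qed

lemma nb_matpow_diag_ge_2:
  assumes "\<tau> \<le> 1" and len: "length vs = length ws" "2 \<le> length vs"
    and walks: "closed_walk E vs" "closed_walk E ws" "nonbacktracking vs" "nonbacktracking ws"
    and start: "vs ! 0 = ws ! 0" "vs ! 1 = ws ! 1" and "vs \<noteq> ws"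
  obtains e K where "0 < K" "2 \<le> matpow (nb_matrix E \<tau>) K $ e $ e"
proof -
  define L where "L = length vs"
  define \<alpha> where "\<alpha> i = (vs ! (i mod L), vs ! (Suc i mod L))" for i
  define \<beta> where "\<beta> i = (ws ! (i mod L), ws ! (Suc i mod L))" for i
  have "1 \<le> nb_matrix E \<tau> $ \<alpha> i $ \<alpha> (Suc i)" "1 \<le> nb_matrix E \<tau> $ \<beta> i $ \<beta> (Suc i)" for i
    using nb_matrix_along_nonbacktracking_walk[OF walks(1,3)] nb_matrix_along_nonbacktracking_walk[OF walks(2,4)]
    by (simp_all add: \<alpha>_def \<beta>_def L_def len(1))
  moreover have "\<alpha> 0 = \<beta> 0" "\<alpha> L = \<alpha> 0" "\<beta> L = \<beta> 0"
    using start len by (simp_all add: \<alpha>_def \<beta>_def L_def mod_Suc)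
  moreover obtain i where "i < L" "vs ! i \<noteq> ws ! i" using \<open>vs \<noteq> ws\<close> len(1) by (metis L_def nth_equalityI)
  then have "\<alpha> i \<noteq> \<beta> i" by (simp add: \<alpha>_def \<beta>_def)
  ultimately have "2 \<le> matpow (nb_matrix E \<tau>) L $ \<alpha> 0 $ \<alpha> L"
    using \<open>i < L\<close> by (intro matpow_entry_ge_2[of _ L \<alpha> \<beta> i] nb_matrix_nonneg[OF \<open>\<tau> \<le> 1\<close>]) auto
  moreover have "0 < L" using len(2) unfolding L_def by linarith
  ultimately show ?thesis using that[of L "\<alpha> 0"] \<open>\<alpha> L = \<alpha> 0\<close> by simp
qed

theorem theorem4p12:
  fixes E :: "'n::finite \<Rightarrow> 'n \<Rightarrow> bool" and \<tau> :: real
  assumes "strongly_connected E"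
    and "\<forall>v. \<not> E v v"
    and "0 < \<tau>" and "\<tau> \<le> 1"
    and "at_least_two_cycles E"
  shows "\<exists>t. 0 < t \<and> t < 1 / \<tau> \<and> det (M_tau (adj_matrix E) \<tau> t) = 0"
proof -
  have loopless: "\<And>v. \<not> E v v" using assms(2) by blast
  obtain c1 c2 where c: "is_cycle E c1" "is_cycle E c2" "\<not> cycle_equiv c1 c2"
    using assms(5) by (auto simp: at_least_two_cycles_def)
  have "independent {closed_flow c1, closed_flow c2}" "closed_flow c1 \<noteq> closed_flow c2"
    using independent_closed_flows_cycles[OF c] by blast+
  then obtain P1 P2 where "closed_walk E P1" "closed_walk E P2" "hd P2 = hd P1"
    "independent {closed_flow P1, closed_flow P2}" "closed_flow P1 \<noteq> closed_flow P2"
    by (rule closed_walks_with_independent_flows[OF assms(1) c(1,2)])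
  then obtain vs ws :: "'n list" where "length vs = length ws" "2 \<le> length vs"
    "closed_walk E vs" "closed_walk E ws" "nonbacktracking vs" "nonbacktracking ws"
    "vs ! 0 = ws ! 0" "vs ! 1 = ws ! 1" "vs \<noteq> ws"
    by (rule nonbacktracking_closed_walks_same_start[OF loopless])
  then obtain e K where "0 < K" "2 \<le> matpow (nb_matrix E \<tau>) K $ e $ e"
    by (rule nb_matpow_diag_ge_2[OF assms(4)])
  moreover have "1 < matpow (nb_matrix E \<tau>) K $ e $ e" using calculation(2) by linarith
  ultimately obtain z \<mu> where z: "z \<noteq> 0" "nb_matrix E \<tau> *v z = \<mu> *\<^sub>R z" "1 < \<mu>"
    using nonneg_matrix_eigenvalue_gt_1[OF nb_matrix_nonneg[OF assms(4)]] by blast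
  have "det (M_tau (adj_matrix E) \<tau> (1 / \<mu>)) = 0"
    using det_M_tau_eq_0_of_nb_eigenvector[OF z(2,1) assms(3)] z(3) assms(4) by simp
  moreover have "1 / \<mu> < 1 / \<tau>" using z(3) assms(3,4) by (simp add: frac_less2)
  ultimately show ?thesis using z(3) by (intro exI[of _ "1 / \<mu>"]) simp
qed

end
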